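(* Let $\mathcal{A}\in\mathbb{R}^{d\times\cdots\times d}$ be an order-$k$ real tensor with the same dimension $d$ in all modes. For every level $1\le\ell\le k$, \[ d^{-(k-\lceil k/\ell\rceil)/2}\|\mathcal{A}\|_F\le\min_{\pi\in\mathcal{P}^\ell_{[k]}}\|\mathrm{Unfold}_\pi(\mathcal{A})\|_\sigma . \]
   Context: $\|\mathcal{A}\|_F$ is the Frobenius norm. For a real tensor $\mathcal{T}\in\mathbb{R}^{e_1\times\cdots\times e_m}$, $\|\mathcal{T}\|_\sigma=\sup\{\sum t_{i_1\dots i_m}x^{(1)}_{i_1}\cdots x^{(m)}_{i_m}:\ \mathbf{x}_n\in\mathbb{R}^{e_n},\ \|\mathbf{x}_n\|_2=1\}$. $\mathcal{P}^\ell_{[k]}$ is the set of partitions of $[k]$ into exactly $\ell$ nonempty blocks. Unfolding: for $\pi=\{B_1,\dots,B_\ell\}$, $\mathrm{Unfold}_\pi(\mathcal{A})$ is the order-$\ell$ tensor of dimensions $(d^{|B_1|},\dots,d^{|B_\ell|})$ whose entry at $(m_1,\dots,m_\ell)$ is $a_{i_1\dots i_k}$, where $m_j$ corresponds to $(i_r)_{r\in B_j}$ under a fixed bijection $[d]^{B_j}\to[d^{|B_j|}]$. *)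

theory Defs
  imports "HOL-Analysis.Analysis" "HOL-Library.Disjoint_Sets"
begin

text \<open>An order-m tensor
with dimensions es (a list of length m) only uses its values on the index tuples
below (0-based indices). Modes are numbered 0..k-1.\<close>

definition tuples :: "nat list \<Rightarrow> nat list set" where
  "tuples es = {idx. length idx = length es \<and> (\<forall>n<length es. idx ! n < es ! n)}"

definition frob_norm :: "nat \<Rightarrow> nat \<Rightarrow> (nat list \<Rightarrow> real) \<Rightarrow> real" where
  "frob_norm d k A = sqrt (\<Sum>idx\<in>tuples (replicate k d). (A idx)^2)"

definition spectral_norm :: "nat list \<Rightarrow> (nat list \<Rightarrow> real) \<Rightarrow> real" where
  "spectral_norm es T = Sup {(\<Sum>idx\<in>tuples es. T idx * (\<Prod>n<length es. x n (idx ! n))) | x.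
       \<forall>n<length es. (\<Sum>i<es ! n. (x n i)^2) = 1}"

definition set_partitions :: "nat \<Rightarrow> nat \<Rightarrow> nat set set set" where
  "set_partitions k l = {P. partition_on {..<k} P \<and> card P = l}"

definition blocks :: "nat set set \<Rightarrow> nat set list" where
  "blocks P = sorted_key_list_of_set Min P"

definition unfold_dims :: "nat \<Rightarrow> nat set set \<Rightarrow> nat list" where
  "unfold_dims d P = map (\<lambda>B. d ^ card B) (blocks P)"

text \<open>Fixed bijection [d]^B \<rightarrow> [d^|B|]: if B = {r_0 < ... < r_{s-1}}, the multi-index
(i_r) is sent to sum_t i_{r_t} d^t. The unfolding entry at (m_1..m_l) is the entry
of A at the multi-index obtained by inverting this bijection blockwise.\<close>
definition unfold :: "nat \<Rightarrow> nat \<Rightarrow> nat set set \<Rightarrow> (nat list \<Rightarrow> real) \<Rightarrow> (nat list \<Rightarrow> real)" where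
  "unfold d k P A = (\<lambda>ms. A (map (\<lambda>r.
      let bs = blocks P;
          j = (THE j. j < length bs \<and> r \<in> bs ! j);
          t = card {s \<in> bs ! j. s < r}
      in (ms ! j div d ^ t) mod d) [0..<k]))"

end

theory Submission
  imports Defs
begin

text \<open>For a partition into blocks \<open>B\<^sub>1, \<dots>, B\<^sub>\<ell>\<close> let \<open>T\<close> be the unfolding of \<open>A\<close>: an order-\<open>\<ell>\<close>
  tensor with \<open>d\<^sup>k\<close> entries whose mode-\<open>j\<close> dimension is \<open>e\<^sub>j = d\<^bsup>|B\<^sub>j|\<^esup>\<close>. Testing \<open>\<parallel>T\<parallel>\<^sub>\<sigma>\<close> against a unit
  vector in mode \<open>j\<close> and coordinate vectors in all other modes shows that every mode-\<open>j\<close> fibre of \<open>T\<close>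
  has Euclidean norm at most \<open>\<parallel>T\<parallel>\<^sub>\<sigma>\<close>. The \<open>d\<^sup>k / e\<^sub>j\<close> mode-\<open>j\<close> fibres partition the entries of \<open>T\<close>, so
  \<open>e\<^sub>j \<parallel>T\<parallel>\<^sub>F\<^sup>2 \<le> d\<^sup>k \<parallel>T\<parallel>\<^sub>\<sigma>\<^sup>2\<close>. For a largest block \<open>|B\<^sub>j| \<ge> \<lceil>k/\<ell>\<rceil>\<close>, and \<open>\<parallel>A\<parallel>\<^sub>F = \<parallel>T\<parallel>\<^sub>F\<close> because the
  unfolding only rearranges the entries.\<close>

lemma sum_digits_less:
  fixes c :: "nat \<Rightarrow> nat"
  assumes "\<forall>u<n. c u < d"
  shows "(\<Sum>u<n. c u * d^u) < d^n"
  using assms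
proof (induction n)
  case (Suc n)
  then have IH: "(\<Sum>u<n. c u * d^u) + 1 \<le> d^n" and digit: "c n + 1 \<le> d" by auto
  have "(\<Sum>u<Suc n. c u * d^u) + 1 \<le> (c n + 1) * d^n" using IH by simp
  also have "\<dots> \<le> d * d^n" using digit by (rule mult_right_mono) simp
  finally show ?case by simp
qed simp

lemma sum_digits_nth:
  fixes c :: "nat \<Rightarrow> nat"
  assumes "\<forall>u<n. c u < d" and "t < n"
  shows "(\<Sum>u<n. c u * d^u) div d^t mod d = c t"
  using assms
proof (induction n arbitrary: c t)
  case (Suc n)
  have c0: "c 0 < d" using Suc.prems by simp
  have shift: "(\<Sum>u<Suc n. c u * d^u) = c 0 + d * (\<Sum>u<n. c (Suc u) * d^u)"
    unfolding sum.lessThan_Suc_shift by (simp add: sum_distrib_left mult.assoc mult.left_commute)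
  show ?case
  proof (cases t)
    case (Suc t')
    have "(\<Sum>u<Suc n. c u * d^u) div d^t = (\<Sum>u<n. c (Suc u) * d^u) div d^t'"
      unfolding shift using c0 by (simp add: Suc div_mult2_eq)
    then show ?thesis using Suc.IH[of "\<lambda>u. c (Suc u)" t'] Suc.prems Suc by simp
  qed (use shift c0 in simp)
qed simp

definition set_rank :: "nat set \<Rightarrow> nat \<Rightarrow> nat" where
  "set_rank B s = card {s' \<in> B. s' < s}"

lemma bij_betw_set_rank:
  assumes "finite B"
  shows "bij_betw (set_rank B) B {..<card B}"
proof -
  have mono: "set_rank B s < set_rank B s'" if "s \<in> B" "s < s'" for s s'
    unfolding set_rank_def using that assms by (intro psubset_card_mono) auto
  have inj: "inj_on (set_rank B) B"
    by (rule inj_onI) (metis mono nat_neq_iff less_irrefl)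
  have "set_rank B ` B \<subseteq> {..<card B}"
    unfolding set_rank_def using assms by (auto intro!: psubset_card_mono)
  moreover have "card (set_rank B ` B) = card {..<card B}"
    using card_image[OF inj] by simp
  ultimately show ?thesis
    using inj by (simp add: bij_betw_def card_subset_eq)
qed

lemma sum_digits_set:
  fixes c :: "nat \<Rightarrow> nat"
  assumes "finite B" and "\<forall>s\<in>B. c s < d"
  shows sum_digits_set_less: "(\<Sum>s\<in>B. c s * d ^ set_rank B s) < d ^ card B"
    and sum_digits_set_nth: "r \<in> B \<Longrightarrow> (\<Sum>s\<in>B. c s * d ^ set_rank B s) div d ^ set_rank B r mod d = c r"
proof -
  define h where "h = the_inv_into B (set_rank B)"
  have bij: "bij_betw (set_rank B) B {..<card B}" using bij_betw_set_rank[OF assms(1)] .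
  have h_set_rank: "h (set_rank B s) = s" if "s \<in> B" for s
    unfolding h_def using bij that by (simp add: bij_betw_def the_inv_into_f_f)
  have h_in: "h u \<in> B" if "u < card B" for u
    unfolding h_def using bij that by (metis bij_betw_def lessThan_iff the_inv_into_into subset_refl)
  have reindex: "(\<Sum>s\<in>B. c s * d ^ set_rank B s) = (\<Sum>u<card B. c (h u) * d^u)"
    using sum.reindex_bij_betw[OF bij, of "\<lambda>u. c (h u) * d^u", symmetric] h_set_rank
    by (simp cong: sum.cong)
  have digits: "\<forall>u<card B. c (h u) < d" using h_in assms(2) by auto
  show "(\<Sum>s\<in>B. c s * d ^ set_rank B s) < d ^ card B"
    using sum_digits_less[OF digits] reindex by simp
  show "(\<Sum>s\<in>B. c s * d ^ set_rank B s) div d ^ set_rank B r mod d = c r" if "r \<in> B"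
    using sum_digits_nth[OF digits, of "set_rank B r"] reindex h_set_rank[OF that] bij that
    by (auto simp: bij_betw_def)
qed

lemma tuples_Cons: "tuples (e # es) = (\<lambda>(i, xs). i # xs) ` ({..<e} \<times> tuples es)"
proof (rule set_eqI)
  fix ys
  show "ys \<in> tuples (e # es) \<longleftrightarrow> ys \<in> (\<lambda>(i, xs). i # xs) ` ({..<e} \<times> tuples es)"
    by (cases ys) (auto simp: tuples_def All_less_Suc2)
qed

lemma finite_tuples: "finite (tuples es)"
  and card_tuples: "card (tuples es) = prod_list es"
proof -
  have "finite (tuples es) \<and> card (tuples es) = prod_list es"
  proof (induction es)
    case Nil
    have "tuples [] = {[]}" by (auto simp: tuples_def)
    then show ?case by simp
  next
    case (Cons e es)
    have "inj_on (\<lambda>(i, xs). i # xs) ({..<e} \<times> tuples es)"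
      by (auto simp: inj_on_def)
    then show ?case
      using Cons by (simp add: tuples_Cons card_image card_cartesian_product)
  qed
  then show "finite (tuples es)" "card (tuples es) = prod_list es" by auto
qed

lemma list_update_in_tuples:
  "m \<in> tuples es \<Longrightarrow> j < length es \<Longrightarrow> i < es ! j \<Longrightarrow> m[j := i] \<in> tuples es"
  by (auto simp: tuples_def nth_list_update)

lemma sum_tuples_fibres:
  fixes g :: "nat list \<Rightarrow> real"
  assumes j: "j < length es"
  shows "(\<Sum>m\<in>tuples es. \<Sum>i<es ! j. g (m[j := i])) = real (es ! j) * (\<Sum>m\<in>tuples es. g m)"
proof -
  let ?S = "tuples es \<times> {..<es ! j}"
  let ?swap = "\<lambda>(m, i). (m[j := i], m ! j)"
  have swap_in: "?swap a \<in> ?S" and swap_swap: "?swap (?swap a) = a" if "a \<in> ?S" for a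
    using that j list_update_in_tuples by (auto simp: tuples_def nth_list_update)
  have "(\<Sum>m\<in>tuples es. \<Sum>i<es ! j. g (m[j := i])) = (\<Sum>(m, i)\<in>?S. g (m[j := i]))"
    by (simp add: sum.cartesian_product)
  also have "\<dots> = (\<Sum>(m, i)\<in>?S. g m)"
    by (rule sum.reindex_bij_witness[where i = ?swap and j = ?swap])
      (use swap_in swap_swap in auto)
  also have "\<dots> = real (es ! j) * (\<Sum>m\<in>tuples es. g m)"
    by (simp add: sum.cartesian_product[symmetric] sum_distrib_left)
  finally show ?thesis .
qed

lemma bdd_above_multilinear_forms:
  fixes T :: "nat list \<Rightarrow> real"
  shows "bdd_above {(\<Sum>idx\<in>tuples es. T idx * (\<Prod>n<length es. x n (idx ! n))) | x.
           \<forall>n<length es. (\<Sum>i<es ! n. (x n i)^2) = 1}"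
proof (rule bdd_aboveI[where M = "\<Sum>idx\<in>tuples es. \<bar>T idx\<bar>"])
  fix y assume "y \<in> {(\<Sum>idx\<in>tuples es. T idx * (\<Prod>n<length es. x n (idx ! n))) | x.
           \<forall>n<length es. (\<Sum>i<es ! n. (x n i)^2) = 1}"
  then obtain x where y: "y = (\<Sum>idx\<in>tuples es. T idx * (\<Prod>n<length es. x n (idx ! n)))"
    and unit: "\<forall>n<length es. (\<Sum>i<es ! n. (x n i)^2) = 1" by blast
  have "\<bar>x n i\<bar> \<le> 1" if "n < length es" "i < es ! n" for n i
  proof -
    have "(x n i)^2 \<le> (\<Sum>i<es ! n. (x n i)^2)"
      using that by (intro member_le_sum) auto
    then show ?thesis using unit that by (simp add: abs_square_le_1)
  qed
  then have prod_le: "\<bar>\<Prod>n<length es. x n (idx ! n)\<bar> \<le> 1" if "idx \<in> tuples es" for idx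
    unfolding abs_prod using that by (intro prod_le_1) (auto simp: tuples_def)
  have "T idx * (\<Prod>n<length es. x n (idx ! n)) \<le> \<bar>T idx\<bar>" if "idx \<in> tuples es" for idx
  proof -
    have "T idx * (\<Prod>n<length es. x n (idx ! n)) \<le> \<bar>T idx\<bar> * \<bar>\<Prod>n<length es. x n (idx ! n)\<bar>"
      by (metis abs_ge_self abs_mult)
    also have "\<dots> \<le> \<bar>T idx\<bar>"
      using prod_le[OF that] by (intro mult_left_le) simp_all
    finally show ?thesis .
  qed
  then show "y \<le> (\<Sum>idx\<in>tuples es. \<bar>T idx\<bar>)"
    unfolding y by (rule sum_mono)
qed

lemma multilinear_form_le_spectral_norm:
  fixes T :: "nat list \<Rightarrow> real"
  assumes "\<forall>n<length es. (\<Sum>i<es ! n. (x n i)^2) = 1"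
  shows "(\<Sum>idx\<in>tuples es. T idx * (\<Prod>n<length es. x n (idx ! n))) \<le> spectral_norm es T"
proof -
  have "(\<Sum>idx\<in>tuples es. T idx * (\<Prod>n<length es. x n (idx ! n)))
      \<in> {(\<Sum>idx\<in>tuples es. T idx * (\<Prod>n<length es. x n (idx ! n))) | x.
           \<forall>n<length es. (\<Sum>i<es ! n. (x n i)^2) = 1}"
    using assms by blast
  then show ?thesis
    unfolding spectral_norm_def by (rule cSup_upper[OF _ bdd_above_multilinear_forms])
qed

lemma unit_vector_attaining_norm:
  fixes f :: "nat \<Rightarrow> real"
  assumes "0 < e"
  obtains v where "(\<Sum>i<e. (v i)^2) = 1" and "(\<Sum>i<e. f i * v i) = sqrt (\<Sum>i<e. (f i)^2)"
proof (cases "(\<Sum>i<e. (f i)^2) = 0")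
  case True
  then have "\<forall>i<e. f i = 0" by (simp add: sum_nonneg_eq_0_iff)
  moreover have "(\<Sum>i<e. (if i = 0 then 1 else 0 :: real)^2) = 1"
    using assms by (simp add: if_distrib[of "\<lambda>x. x^2"] cong: if_cong)
  ultimately show ?thesis
    using True by (intro that[of "\<lambda>i. if i = 0 then 1 else 0"]) simp_all
next
  case False
  define F where "F = (\<Sum>i<e. (f i)^2)"
  have "F > 0" using False by (simp add: F_def order_le_neq_trans sum_nonneg)
  show ?thesis
  proof (rule that[of "\<lambda>i. f i / sqrt F"])
    show "(\<Sum>i<e. (f i / sqrt F)^2) = 1"
      using \<open>F > 0\<close> by (simp add: power_divide sum_divide_distrib[symmetric] F_def)
    have "(\<Sum>i<e. f i * (f i / sqrt F)) = F / sqrt F"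
      by (simp add: F_def sum_divide_distrib power2_eq_square)
    then show "(\<Sum>i<e. f i * (f i / sqrt F)) = sqrt (\<Sum>i<e. (f i)^2)"
      using \<open>F > 0\<close> by (simp add: F_def real_div_sqrt)
  qed
qed

text \<open>Against the rank-one form \<open>v \<otimes> e\<^sub>m\<close> (the unit vector \<open>v\<close> in mode \<open>j\<close>, the coordinate
  vectors \<open>e\<^bsub>m ! n\<^esub>\<close> elsewhere) a tensor only sees its fibre through \<open>m\<close>.\<close>
lemma multilinear_form_fibre:
  fixes T :: "nat list \<Rightarrow> real"
  assumes m: "m \<in> tuples es" and j: "j < length es"
  shows "(\<Sum>idx\<in>tuples es. T idx *
            (\<Prod>n<length es. if n = j then v (idx ! n) else if idx ! n = m ! n then 1 else 0))
       = (\<Sum>i<es ! j. T (m[j := i]) * v i)"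
proof -
  let ?x = "\<lambda>n i. if n = j then v i else if i = m ! n then 1 else 0 :: real"
  let ?fibre = "(\<lambda>i. m[j := i]) ` {..<es ! j}"
  have len_m: "length m = length es" using m by (simp add: tuples_def)
  have prod_eq: "(\<Prod>n<length es. ?x n (idx ! n)) = (if idx \<in> ?fibre then v (idx ! j) else 0)"
    if idx: "idx \<in> tuples es" for idx
  proof -
    have split: "(\<Prod>n<length es. ?x n (idx ! n))
        = v (idx ! j) * (\<Prod>n\<in>{..<length es} - {j}. ?x n (idx ! n))"
      using j by (subst prod.remove[of _ j]) auto
    show ?thesis
    proof (cases "\<forall>n<length es. n \<noteq> j \<longrightarrow> idx ! n = m ! n")
      case True
      then have "idx = m[j := idx ! j]"
        using idx len_m j by (intro nth_equalityI) (auto simp: tuples_def nth_list_update)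
      moreover have "idx ! j < es ! j" using idx j by (auto simp: tuples_def)
      ultimately have "idx \<in> ?fibre" by blast
      moreover have "(\<Prod>n\<in>{..<length es} - {j}. ?x n (idx ! n)) = 1"
        using True by (intro prod.neutral) auto
      ultimately show ?thesis using split by simp
    next
      case False
      then obtain n where n: "n < length es" "n \<noteq> j" "idx ! n \<noteq> m ! n" by blast
      then have "idx \<notin> ?fibre" by (auto simp: nth_list_update)
      moreover have "(\<Prod>n\<in>{..<length es} - {j}. ?x n (idx ! n)) = 0"
        using n by (intro prod_zero) (auto intro!: bexI[of _ n])
      ultimately show ?thesis using split by simp
    qed
  qed
  have inj: "inj_on (\<lambda>i. m[j := i]) {..<es ! j}"
    by (rule inj_onI) (metis j len_m nth_list_update_eq)
  have fibre_tuples: "?fibre \<subseteq> tuples es" using list_update_in_tuples[OF m j] by auto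
  have "(\<Sum>idx\<in>tuples es. T idx * (\<Prod>n<length es. ?x n (idx ! n)))
      = (\<Sum>idx\<in>tuples es. if idx \<in> ?fibre then T idx * v (idx ! j) else 0)"
    by (rule sum.cong) (simp_all add: prod_eq)
  also have "\<dots> = (\<Sum>idx\<in>?fibre. T idx * v (idx ! j))"
    using fibre_tuples by (simp add: sum.inter_restrict[OF finite_tuples, symmetric] Int_absorb1)
  also have "\<dots> = (\<Sum>i<es ! j. T (m[j := i]) * v i)"
    using j len_m by (simp add: sum.reindex[OF inj])
  finally show ?thesis .
qed

lemma fibre_norm_le_spectral_norm:
  fixes T :: "nat list \<Rightarrow> real"
  assumes pos: "\<forall>n<length es. 0 < es ! n" and j: "j < length es" and m: "m \<in> tuples es"
  shows "sqrt (\<Sum>i<es ! j. (T (m[j := i]))^2) \<le> spectral_norm es T"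
proof -
  obtain v where v_unit: "(\<Sum>i<es ! j. (v i)^2) = 1"
    and v_norm: "(\<Sum>i<es ! j. T (m[j := i]) * v i) = sqrt (\<Sum>i<es ! j. (T (m[j := i]))^2)"
    using unit_vector_attaining_norm[of "es ! j" "\<lambda>i. T (m[j := i])"] pos j by auto
  let ?x = "\<lambda>n i. if n = j then v i else if i = m ! n then 1 else 0 :: real"
  have "(\<Sum>i<es ! n. (?x n i)^2) = 1" if "n < length es" for n
  proof (cases "n = j")
    case False
    have "m ! n < es ! n" using m that by (simp add: tuples_def)
    then show ?thesis using False by (simp add: if_distrib[of "\<lambda>x. x^2"] cong: if_cong)
  qed (use v_unit in simp)
  then show ?thesis
    using multilinear_form_le_spectral_norm[of es ?x T] multilinear_form_fibre[OF m j, of T v] v_norm by simp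
qed

lemma spectral_norm_nonneg:
  assumes "\<forall>n<length es. 0 < es ! n" and "es \<noteq> []"
  shows "0 \<le> spectral_norm es T"
proof -
  let ?m = "replicate (length es) 0"
  have "0 \<le> sqrt (\<Sum>i<es ! 0. (T (?m[0 := i]))^2)" by (simp add: sum_nonneg)
  also have "\<dots> \<le> spectral_norm es T"
    by (rule fibre_norm_le_spectral_norm) (use assms in \<open>auto simp: tuples_def\<close>)
  finally show ?thesis .
qed

lemma spectral_norm_bounds_frobenius:
  fixes T :: "nat list \<Rightarrow> real"
  assumes pos: "\<forall>n<length es. 0 < es ! n" and j: "j < length es"
  shows "real (es ! j) * (\<Sum>m\<in>tuples es. (T m)^2) \<le> real (prod_list es) * (spectral_norm es T)^2"
proof -
  have fibre: "(\<Sum>i<es ! j. (T (m[j := i]))^2) \<le> (spectral_norm es T)^2" if "m \<in> tuples es" for m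
  proof -
    let ?F = "\<Sum>i<es ! j. (T (m[j := i]))^2"
    have "?F = (sqrt ?F)^2" by (simp add: sum_nonneg)
    also have "\<dots> \<le> (spectral_norm es T)^2"
      using fibre_norm_le_spectral_norm[OF pos j that] by (intro power_mono) (simp_all add: sum_nonneg)
    finally show ?thesis .
  qed
  have "real (es ! j) * (\<Sum>m\<in>tuples es. (T m)^2) = (\<Sum>m\<in>tuples es. \<Sum>i<es ! j. (T (m[j := i]))^2)"
    using sum_tuples_fibres[OF j, of "\<lambda>m. (T m)^2"] by simp
  also have "\<dots> \<le> (\<Sum>m\<in>tuples es. (spectral_norm es T)^2)"
    using fibre by (rule sum_mono)
  also have "\<dots> = real (prod_list es) * (spectral_norm es T)^2"
    by (simp add: card_tuples)
  finally show ?thesis .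
qed

context linorder
begin

lemma sorted_key_list_of_set_inj_on:
  assumes "inj_on f A" and "finite A"
  shows "set (sorted_key_list_of_set f A) = A"
    and "distinct (sorted_key_list_of_set f A)"
    and "length (sorted_key_list_of_set f A) = card A"
proof -
  interpret folding_insort_key "(\<le>)" "(<)" A f
    using assms(1) by unfold_locales
  show "set (sorted_key_list_of_set f A) = A" "length (sorted_key_list_of_set f A) = card A"
    using assms(2) by simp_all
  show "distinct (sorted_key_list_of_set f A)"
    by (rule distinct_if_distinct_map) simp
qed

end

lemma finite_partition_block: "finite A \<Longrightarrow> partition_on A P \<Longrightarrow> B \<in> P \<Longrightarrow> finite B"
  by (metis Union_upper finite_subset partition_onD1)

lemma
  assumes "finite A" and P: "partition_on A P"
  shows set_blocks: "set (blocks P) = P"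
    and distinct_blocks: "distinct (blocks P)"
    and length_blocks: "length (blocks P) = card P"
proof -
  have finite_P: "finite P" using finite_elements[OF assms] .
  have block: "finite B" "B \<noteq> {}" if "B \<in> P" for B
    using that finite_partition_block[OF assms] partition_onD3[OF P] by auto
  have "inj_on Min P"
  proof (rule inj_onI)
    fix B B' assume "B \<in> P" "B' \<in> P" "Min B = Min B'"
    then have "Min B \<in> B \<inter> B'" using block by (metis IntI Min_in)
    then show "B = B'"
      using partition_onD2[OF P] \<open>B \<in> P\<close> \<open>B' \<in> P\<close> by (auto dest: disjointD)
  qed
  then show "set (blocks P) = P" "distinct (blocks P)" "length (blocks P) = card P"
    unfolding blocks_def using finite_P by (simp_all add: sorted_key_list_of_set_inj_on)
qed

lemma the_block_index:
  assumes "finite A" and P: "partition_on A P" and j: "j < length (blocks P)" "r \<in> blocks P ! j"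
  shows "(THE j. j < length (blocks P) \<and> r \<in> blocks P ! j) = j"
proof (rule the_equality)
  fix j' assume j': "j' < length (blocks P) \<and> r \<in> blocks P ! j'"
  have "blocks P ! j \<in> P" "blocks P ! j' \<in> P"
    using j j' set_blocks[OF assms(1) P] nth_mem by blast+
  then have "blocks P ! j' = blocks P ! j"
    using partition_onD2[OF P] j j' by (auto dest: disjointD)
  then show "j' = j" using distinct_blocks[OF assms(1) P] j j' by (simp add: nth_eq_iff_index_eq)
qed (use j in simp)

lemma length_unfold_dims: "partition_on {..<k} P \<Longrightarrow> length (unfold_dims d P) = card P"
  by (simp add: unfold_dims_def length_blocks[OF finite_lessThan])

lemma nth_unfold_dims:
  "partition_on {..<k} P \<Longrightarrow> j < card P \<Longrightarrow> unfold_dims d P ! j = d ^ card (blocks P ! j)"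
  by (simp add: unfold_dims_def length_blocks[OF finite_lessThan])

lemma prod_list_unfold_dims:
  assumes P: "partition_on {..<k} P"
  shows "prod_list (unfold_dims d P) = d ^ k"
proof -
  have "prod_list (map (\<lambda>B. d ^ card B) bs) = d ^ sum_list (map card bs)" for bs :: "nat set list"
    by (induction bs) (simp_all add: power_add)
  then have "prod_list (unfold_dims d P) = d ^ sum_list (map card (blocks P))"
    unfolding unfold_dims_def .
  also have "sum_list (map card (blocks P)) = (\<Sum>B\<in>P. card B)"
    using set_blocks[OF finite_lessThan P] distinct_blocks[OF finite_lessThan P] by (metis sum_list_distinct_conv_sum_set)
  also have "\<dots> = k"
    using product_partition[OF P finite_partition_block[OF finite_lessThan P]] by simp
  finally show ?thesis .
qed

text \<open>The bijections \<open>[d]\<^bsup>B\<^esup> \<rightarrow> [d\<^bsup>|B|\<^esup>]\<close> that the unfolding inverts, applied blockwise.\<close>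
definition unfold_encode :: "nat \<Rightarrow> nat set set \<Rightarrow> nat list \<Rightarrow> nat list" where
  "unfold_encode d P idx = map (\<lambda>B. \<Sum>s\<in>B. idx ! s * d ^ set_rank B s) (blocks P)"

lemma
  assumes P: "partition_on {..<k} P" and idx: "idx \<in> tuples (replicate k d)"
  shows unfold_encode_in_tuples: "unfold_encode d P idx \<in> tuples (unfold_dims d P)"
    and unfold_unfold_encode: "unfold d k P A (unfold_encode d P idx) = A idx"
proof -
  let ?bs = "blocks P"
  have block: "finite B" "\<forall>s\<in>B. idx ! s < d" if "B \<in> P" for B
  proof -
    have "B \<subseteq> {..<k}" using that partition_onD1[OF P] by blast
    then show "finite B" "\<forall>s\<in>B. idx ! s < d"
      using idx by (auto simp: tuples_def intro: finite_subset)
  qed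
  have block_nth: "?bs ! j \<in> P" if "j < length ?bs" for j
    using that set_blocks[OF finite_lessThan P] nth_mem by blast
  show "unfold_encode d P idx \<in> tuples (unfold_dims d P)"
    using sum_digits_set_less[OF block[OF block_nth]]
    by (auto simp: tuples_def unfold_encode_def unfold_dims_def)
  define J where "J r = (THE j. j < length ?bs \<and> r \<in> ?bs ! j)" for r
  have digit: "unfold_encode d P idx ! J r div d ^ card {s \<in> ?bs ! J r. s < r} mod d = idx ! r"
    if "r < k" for r
  proof -
    have "r \<in> \<Union>P" using that partition_onD1[OF P] by auto
    then obtain j where j: "j < length ?bs" "r \<in> ?bs ! j"
      using set_blocks[OF finite_lessThan P] by (metis UnionE in_set_conv_nth)
    then show ?thesis
      using sum_digits_set_nth[OF block[OF block_nth[OF j(1)]] j(2)]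
      by (simp add: J_def the_block_index[OF finite_lessThan P j] unfold_encode_def set_rank_def)
  qed
  show "unfold d k P A (unfold_encode d P idx) = A idx"
    unfolding unfold_def Let_def J_def[symmetric]
    using idx digit by (intro arg_cong[where f = A] nth_equalityI) (auto simp: tuples_def)
qed

lemma sum_squares_le_unfold:
  fixes A :: "nat list \<Rightarrow> real"
  assumes P: "partition_on {..<k} P"
  shows "(\<Sum>idx\<in>tuples (replicate k d). (A idx)^2)
      \<le> (\<Sum>ms\<in>tuples (unfold_dims d P). (unfold d k P A ms)^2)"
proof -
  let ?enc = "unfold_encode d P"
  have inj: "inj_on ?enc (tuples (replicate k d))"
  proof (rule inj_onI)
    fix a b assume ab: "a \<in> tuples (replicate k d)" "b \<in> tuples (replicate k d)" "?enc a = ?enc b"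
    let ?indicator = "\<lambda>x. if x = a then 1 else 0 :: real"
    have "?indicator a = ?indicator b"
      using unfold_unfold_encode[OF P ab(1), of ?indicator]
        unfold_unfold_encode[OF P ab(2), of ?indicator] ab(3) by metis
    then show "a = b" by (metis zero_neq_one)
  qed
  have "(\<Sum>idx\<in>tuples (replicate k d). (A idx)^2)
      = (\<Sum>idx\<in>tuples (replicate k d). (unfold d k P A (?enc idx))^2)"
    by (rule sum.cong) (simp_all add: unfold_unfold_encode[OF P])
  also have "\<dots> = (\<Sum>ms\<in>?enc ` tuples (replicate k d). (unfold d k P A ms)^2)"
    by (rule sum.reindex[OF inj, unfolded comp_def, symmetric])
  also have "\<dots> \<le> (\<Sum>ms\<in>tuples (unfold_dims d P). (unfold d k P A ms)^2)"
    using unfold_encode_in_tuples[OF P] finite_tuples by (intro sum_mono2) auto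
  finally show ?thesis .
qed

lemma partition_on_exists_large_block:
  assumes "finite A" and P: "partition_on A P" and "0 < card P"
  obtains B where "B \<in> P" and "card A \<le> card P * card B"
proof -
  have finite_P: "finite P" using finite_elements[OF assms(1,2)] .
  have "P \<noteq> {}" using assms(3) by auto
  then have "Max (card ` P) \<in> card ` P" using finite_P by (intro Max_in) auto
  then obtain B where B: "B \<in> P" "card B = Max (card ` P)" by auto
  then have largest: "\<forall>B'\<in>P. card B' \<le> card B" using finite_P by simp
  have "card A = (\<Sum>B'\<in>P. card B')"
    using product_partition[OF P finite_partition_block[OF assms(1,2)]] .
  also have "\<dots> \<le> card P * card B"
    using largest sum_bounded_above[of P card "card B"] by simp
  finally show ?thesis using that B(1) by blast
qed

lemma powr_scaled_sqrt_le:
  fixes d x S c m k :: real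
  assumes d: "1 \<le> d" and "0 \<le> x" "0 \<le> S" "c \<le> m"
    and bound: "d powr m * x \<le> d powr k * S^2"
  shows "d powr (- (k - c) / 2) * sqrt x \<le> S"
proof -
  have "d powr k = d powr m * d powr (k - m)" by (simp add: powr_add[symmetric])
  then have "d powr m * x \<le> d powr m * (d powr (k - m) * S^2)"
    using bound by (simp add: mult.assoc)
  then have "x \<le> d powr (k - m) * S^2"
    by (rule mult_left_le_imp_le) (use d in simp)
  also have "\<dots> \<le> d powr (k - c) * S^2"
    using d \<open>c \<le> m\<close> by (intro mult_right_mono powr_mono) simp_all
  also have "\<dots> = (d powr ((k - c) / 2) * S)^2"
    using d by (simp add: power_mult_distrib powr_add[symmetric] power2_eq_square)
  finally have "sqrt x \<le> d powr ((k - c) / 2) * S"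
    using \<open>0 \<le> S\<close> by (simp add: real_le_lsqrt real_sqrt_le_iff)
  then have "d powr (- (k - c) / 2) * sqrt x \<le> d powr (- (k - c) / 2) * (d powr ((k - c) / 2) * S)"
    by (intro mult_left_mono) simp_all
  also have "\<dots> = S"
    using d by (simp add: powr_add[symmetric] mult.assoc[symmetric] add_divide_distrib[symmetric])
  finally show ?thesis .
qed

lemma frobenius_le_spectral_norm_unfold:
  fixes A :: "nat list \<Rightarrow> real"
  assumes d: "1 \<le> d" and l: "1 \<le> l" and P: "P \<in> set_partitions k l"
  shows "real d powr (- (real k - of_int \<lceil>real k / real l\<rceil>) / 2) * frob_norm d k A
    \<le> spectral_norm (unfold_dims d P) (unfold d k P A)"
proof -
  have part: "partition_on {..<k} P" and card_P: "card P = l"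
    using P by (simp_all add: set_partitions_def)
  let ?es = "unfold_dims d P" and ?T = "unfold d k P A"
  let ?S = "spectral_norm ?es ?T"
  have pos: "\<forall>n<length ?es. 0 < ?es ! n"
    using d by (simp add: length_unfold_dims[OF part] nth_unfold_dims[OF part])
  have "length ?es = l" using card_P length_unfold_dims[OF part] by simp
  then have "?es \<noteq> []" using l by auto
  then have S_nonneg: "0 \<le> ?S" using spectral_norm_nonneg[OF pos] by blast
  obtain B where B: "B \<in> P" "k \<le> l * card B"
    using partition_on_exists_large_block[OF finite_lessThan part] card_P l by auto
  then obtain j where j: "j < card P" "blocks P ! j = B"
    using set_blocks[OF finite_lessThan part] length_blocks[OF finite_lessThan part] by (metis in_set_conv_nth)
  have "real d powr real (card B) * (\<Sum>idx\<in>tuples (replicate k d). (A idx)^2)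
      \<le> real d powr real (card B) * (\<Sum>ms\<in>tuples ?es. (?T ms)^2)"
    using sum_squares_le_unfold[OF part] by (intro mult_left_mono) simp_all
  also have "\<dots> \<le> real d powr real k * ?S^2"
    using spectral_norm_bounds_frobenius[OF pos, of j ?T] j d
    by (simp add: length_unfold_dims[OF part] nth_unfold_dims[OF part] prod_list_unfold_dims[OF part]
        powr_realpow)
  finally have bound:
    "real d powr real (card B) * (\<Sum>idx\<in>tuples (replicate k d). (A idx)^2) \<le> real d powr real k * ?S^2" .
  have "real k / real l \<le> real (card B)"
    using B(2) l by (simp add: divide_le_eq mult.commute flip: of_nat_mult)
  then have "\<lceil>real k / real l\<rceil> \<le> int (card B)"
    by (simp add: ceiling_le_iff)
  then have ceiling_le: "of_int \<lceil>real k / real l\<rceil> \<le> real (card B)"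
    by (metis of_int_of_nat_eq of_int_le_iff)
  show ?thesis
    unfolding frob_norm_def
    by (rule powr_scaled_sqrt_le[OF _ _ S_nonneg ceiling_le bound]) (use d in \<open>simp_all add: sum_nonneg\<close>)
qed

lemma finite_set_partitions: "finite (set_partitions k l)"
  unfolding set_partitions_def
  by (rule finite_subset[OF _ finitely_many_partition_on[of "{..<k}"]]) auto

text \<open>One block \<open>{l - 1..<k}\<close> together with the singletons below it.\<close>
lemma set_partitions_nonempty:
  assumes "1 \<le> l" and "l \<le> k"
  shows "set_partitions k l \<noteq> {}"
proof -
  let ?singletons = "(\<lambda>i. {i}) ` {..<l - 1}"
  have "disjnt {l - 1..<k} (\<Union>?singletons)" by (auto simp: disjnt_def)
  moreover have "{l - 1..<k} \<subseteq> {..<k}" "{l - 1..<k} \<noteq> {}" "{..<k} - {l - 1..<k} = {..<l - 1}"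
    using assms by auto
  ultimately have "partition_on {..<k} (insert {l - 1..<k} ?singletons)"
    by (simp only: partition_on_insert partition_on_singletons simp_thms)
  moreover have "{l - 1..<k} \<notin> ?singletons"
  proof
    assume "{l - 1..<k} \<in> ?singletons"
    then obtain i where "i < l - 1" "{l - 1..<k} = {i}" by auto
    moreover have "l - 1 \<in> {l - 1..<k}" using assms by simp
    ultimately show False by auto
  qed
  then have "card (insert {l - 1..<k} ?singletons) = l"
    using assms by (simp add: card_image)
  ultimately show ?thesis unfolding set_partitions_def by blast
qed

theorem corollary4p14:
  fixes d k l :: nat and A :: "nat list \<Rightarrow> real"
  assumes "d \<ge> 1" and "1 \<le> l" and "l \<le> k"
  shows "real d powr (- (real k - of_int \<lceil>real k / real l\<rceil>) / 2) * frob_norm d k A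
         \<le> Min ((\<lambda>P. spectral_norm (unfold_dims d P) (unfold d k P A)) ` set_partitions k l)"
  using frobenius_le_spectral_norm_unfold[OF assms(1,2)] finite_set_partitions
    set_partitions_nonempty[OF assms(2,3)]
  by simp

end
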